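(* Fix an agent index $i$. For every $w\in\mathcal{R}_\infty^i$: (i) $Sw\in\mathcal{R}_\infty^i$; (ii) $S^{-1}w\in\mathcal{R}_\infty^i$; (iii) $S\mathcal{R}_\infty^i = \mathcal{R}_\infty^i$; (iv) $[(\Pi_i w)^\top\ w^\top]^\top\in\mathcal{O}_\infty^i$.
   Context: Agent $i$ has matrices $A_i\in\mathbb{R}^{n_i\times n_i}$, $B_i\in\mathbb{R}^{n_i\times m_i}$, $C_i\in\mathbb{R}^{q\times n_i}$ with $(A_i,B_i)$ controllable, and a constraint set $\mathbb{Z}_i\subset\mathbb{R}^{n_i+m_i}$ which is a polytope containing the origin in its interior. $K_i$ is fixed with $A_i^c := A_i + B_iK_i$ Schur. $S\in\mathbb{R}^{p\times p}$, $Q_e\in\mathbb{R}^{q\times p}$ with $S^\rho = I$ for some positive integer $\rho$, and for each eigenvalue $\lambda$ of $S$ the matrix $\begin{bmatrix} A_i-\lambda I & B_i\\ C_i & \mathbf{0}\end{bmatrix}$ has full row rank. $\Pi_i,\Gamma_i$ satisfy $A_i\Pi_i + B_i\Gamma_i = \Pi_iS$, $C_i\Pi_i = Q_e$, and $L_i := \Gamma_i - K_i\Pi_i$. Fix $\epsilon_i\in(0,1)$. $\mathcal{O}_\infty^i$ is the set of $(x,w)\in\mathbb{R}^{n_i}\times\mathbb{R}^p$ such that the sequence $x(0)=x$, $w(0)=w$, $x(k+1) = A_i^cx(k) + B_iL_iw(k)$, $w(k+1) = Sw(k)$ satisfies $[x(k)^\top\ (K_ix(k) + L_iw(k))^\top]^\top\in(1-\epsilon_i)\mathbb{Z}_i$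 for all $k\ge0$. $\mathcal{R}_\infty^i = \{w\in\mathbb{R}^p : \exists x \text{ with } [x^\top\ w^\top]^\top\in\mathcal{O}_\infty^i\}$. *)

theory Defs
  imports "HOL-Analysis.Analysis"
begin

text \<open>Matrix power (note: the default power on vec types is componentwise).\<close>
definition mat_pow :: "real^'n^'n \<Rightarrow> nat \<Rightarrow> real^'n^'n" where
  "mat_pow A k = (((**) A) ^^ k) (mat 1)"

definition cmat :: "real^'c^'r \<Rightarrow> complex^'c^'r" where
  "cmat M = (\<chi> i j. complex_of_real (M $ i $ j))"

definition controllable :: "real^'n^'n \<Rightarrow> real^'m^'n \<Rightarrow> bool" where
  "controllable A B \<longleftrightarrow>
     span {mat_pow A k *v (B *v u) | k u. k < CARD('n)} = (UNIV :: (real^'n) set)"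

definition schur :: "real^'n^'n \<Rightarrow> bool" where
  "schur A \<longleftrightarrow> (\<forall>(l::complex) (v::complex^'n). v \<noteq> 0 \<and> cmat A *v v = l *s v \<longrightarrow> cmod l < 1)"

definition is_eigenvalue :: "real^'p^'p \<Rightarrow> complex \<Rightarrow> bool" where
  "is_eigenvalue S \<mu> \<longleftrightarrow> (\<exists>v::complex^'p. v \<noteq> 0 \<and> cmat S *v v = \<mu> *s v)"

definition regulator_block ::
  "real^'n^'n \<Rightarrow> real^'m^'n \<Rightarrow> real^'n^'q \<Rightarrow> complex \<Rightarrow> complex^('n + 'm)^('n + 'q)" where
  "regulator_block A B C \<mu> = (\<chi> r c.
     (case r of
        Inl i \<Rightarrow> (case c of Inl j \<Rightarrow> complex_of_real (A $ i $ j) - (if i = j then \<mu> else 0)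
                           | Inr j \<Rightarrow> complex_of_real (B $ i $ j))
      | Inr i \<Rightarrow> (case c of Inl j \<Rightarrow> complex_of_real (C $ i $ j)
                           | Inr j \<Rightarrow> 0)))"

definition full_row_rank :: "'a::field^'c^'r \<Rightarrow> bool" where
  "full_row_rank M \<longleftrightarrow> rank M = CARD('r)"

fun traj :: "real^'n^'n \<Rightarrow> real^'p^'n \<Rightarrow> real^'p^'p \<Rightarrow> real^'n \<Rightarrow> real^'p \<Rightarrow> nat
             \<Rightarrow> (real^'n) \<times> (real^'p)" where
  "traj Ac BL S x w 0 = (x, w)"
| "traj Ac BL S x w (Suc k) =
     (let (xk, wk) = traj Ac BL S x w k in (Ac *v xk + BL *v wk, S *v wk))"

definition O_inf :: "real^'n^'n \<Rightarrow> real^'m^'n \<Rightarrow> real^'n^'m \<Rightarrow> real^'p^'m \<Rightarrow> real^'p^'p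
                     \<Rightarrow> ((real^'n) \<times> (real^'m)) set \<Rightarrow> real \<Rightarrow> ((real^'n) \<times> (real^'p)) set" where
  "O_inf A B K L S Z \<epsilon> = {(x, w). \<forall>k.
      (let (xk, wk) = traj (A + B ** K) (B ** L) S x w k
       in (xk, K *v xk + L *v wk) \<in> (\<lambda>z. (1 - \<epsilon>) *\<^sub>R z) ` Z)}"

definition R_inf :: "real^'n^'n \<Rightarrow> real^'m^'n \<Rightarrow> real^'n^'m \<Rightarrow> real^'p^'m \<Rightarrow> real^'p^'p
                     \<Rightarrow> ((real^'n) \<times> (real^'m)) set \<Rightarrow> real \<Rightarrow> (real^'p) set" where
  "R_inf A B K L S Z \<epsilon> = {w. \<exists>x. (x, w) \<in> O_inf A B K L S Z \<epsilon>}"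

end

(*
  Writing e = x - Pi w, the regulator equation turns the closed loop into
  x(k) = Pi S^k w + Ac^k e. Shift invariance of O_infinity gives S R \<subseteq> R, and
  S^rho = I makes S invertible with S^-1 = S^(rho-1), so S R = R and S^-1 R \<subseteq> R.
  Along the times k + j rho the exosystem state is fixed while Ac^(k + j rho) e \<rightarrow> 0
  by Schur stability (via the Jordan normal form bound on powers of a matrix with
  spectral radius below 1). Hence the constraint point of the steady-state trajectory
  from (Pi w, w) at time k is a limit of admissible constraint points and lies in
  the closed set (1 - \<epsilon>) Z.
*)
theory Submission
  imports Defs "Jordan_Normal_Form.Spectral_Radius"
begin

no_notation Matrix.vec_index (infixl \<open>$\<close> 100)
hide_const (open) Matrix.mat Matrix.vec Matrix.row Matrix.col
hide_type (open) Matrix.mat Matrix.vec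

lemma mat_pow_0 [simp]: "mat_pow A 0 = mat 1"
  by (simp add: mat_pow_def)

lemma mat_pow_Suc: "mat_pow A (Suc k) = A ** mat_pow A k"
  by (simp add: mat_pow_def)

lemma mat_pow_add: "mat_pow A (k + l) = mat_pow A k ** mat_pow A l"
  by (induction k) (simp_all add: mat_pow_Suc matrix_mul_assoc)

lemma mat_pow_Suc': "mat_pow A (Suc k) = mat_pow A k ** A"
  using mat_pow_add[of A k 1] by (simp add: mat_pow_Suc)

lemma mat_pow_add_mult_period:
  assumes "mat_pow S \<rho> = mat 1"
  shows "mat_pow S (k + j * \<rho>) = mat_pow S k"
proof -
  have "mat_pow S (j * \<rho>) = mat 1"
    by (induction j) (simp_all add: mat_pow_add assms)
  then show ?thesis
    by (simp add: mat_pow_add)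
qed

lemma matrix_inv_unique:
  fixes A :: "'a::semiring_1^'n^'n"
  assumes AB: "A ** B = mat 1" and BA: "B ** A = mat 1"
  shows "matrix_inv A = B"
proof -
  have "A ** matrix_inv A = mat 1 \<and> matrix_inv A ** A = mat 1"
    unfolding matrix_inv_def by (rule someI_ex) (use AB BA in blast)
  then have "matrix_inv A = (B ** A) ** matrix_inv A"
    by (simp add: BA)
  also have "\<dots> = B"
    using \<open>A ** matrix_inv A = mat 1 \<and> _\<close> by (simp add: matrix_mul_assoc[symmetric])
  finally show ?thesis .
qed

lemma mat_pow_period_inverse:
  assumes "mat_pow S \<rho> = mat 1" "0 < \<rho>"
  shows "S ** mat_pow S (\<rho> - 1) = mat 1" "mat_pow S (\<rho> - 1) ** S = mat 1"
proof -
  have "\<rho> = Suc (\<rho> - 1)"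
    using assms(2) by simp
  then show "S ** mat_pow S (\<rho> - 1) = mat 1" "mat_pow S (\<rho> - 1) ** S = mat 1"
    using assms(1) by (metis mat_pow_Suc, metis mat_pow_Suc')
qed

lemma pow_mat_smult:
  assumes "A \<in> carrier_mat n n"
  shows "(c \<cdot>\<^sub>m A) ^\<^sub>m k = (c ^ k :: 'a::comm_ring_1) \<cdot>\<^sub>m A ^\<^sub>m k"
  using assms by (induction k) (auto simp: mult_smult_assoc_mat mult_smult_distrib intro: eq_matI)

lemma eigenvalue_smult_mat:
  assumes A: "A \<in> carrier_mat n n" and c: "(c::'a::field) \<noteq> 0"
    and ev: "eigenvalue (c \<cdot>\<^sub>m A) \<mu>"
  shows "eigenvalue A (\<mu> / c)"
proof -
  from ev obtain v where v: "v \<in> carrier_vec n" "v \<noteq> 0\<^sub>v n" "(c \<cdot>\<^sub>m A) *\<^sub>v v = \<mu> \<cdot>\<^sub>v v"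
    using A unfolding eigenvalue_def eigenvector_def by auto
  have "A *\<^sub>v v = (\<mu> / c) \<cdot>\<^sub>v v"
  proof (rule eq_vecI)
    fix i assume "i < dim_vec ((\<mu> / c) \<cdot>\<^sub>v v)"
    then have i: "i < n" using v by simp
    have "c * vec_index (A *\<^sub>v v) i = vec_index ((c \<cdot>\<^sub>m A) *\<^sub>v v) i"
      using i A v(1) by simp
    also have "\<dots> = \<mu> * vec_index v i"
      using i v by (simp add: v(3))
    finally show "vec_index (A *\<^sub>v v) i = vec_index ((\<mu> / c) \<cdot>\<^sub>v v) i"
      using i v c by (simp add: field_simps)
  qed (use A v in simp)
  then show ?thesis
    using A v unfolding eigenvalue_def eigenvector_def by auto
qed

lemma spectral_radius_smult_le:
  assumes A: "A \<in> carrier_mat n n" and n: "0 < n" and r: "0 < r"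
  shows "spectral_radius (complex_of_real (1 / r) \<cdot>\<^sub>m A) \<le> spectral_radius A / r"
proof -
  have "complex_of_real (1 / r) \<cdot>\<^sub>m A \<in> carrier_mat n n"
    using A by simp
  then obtain \<mu> where \<mu>: "eigenvalue (complex_of_real (1 / r) \<cdot>\<^sub>m A) \<mu>"
    and sr: "spectral_radius (complex_of_real (1 / r) \<cdot>\<^sub>m A) = cmod \<mu>"
    using spectral_radius_mem_max(1)[OF _ n] unfolding spectrum_def by blast
  have "eigenvalue A (\<mu> * complex_of_real r)"
    using eigenvalue_smult_mat[OF A _ \<mu>] r by simp
  then have "cmod (\<mu> * complex_of_real r) \<le> spectral_radius A"
    using spectral_radius_mem_max(2)[OF A n] unfolding spectrum_def by blast
  then show ?thesis
    using r sr by (simp add: norm_mult pos_le_divide_eq)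
qed

lemma pow_mat_norm_bound_geometric:
  assumes A: "A \<in> carrier_mat n n" and n: "0 < n" and sr: "spectral_radius A < 1"
  shows "\<exists>c r. 0 < r \<and> r < 1 \<and> (\<forall>k. norm_bound (A ^\<^sub>m k) (c * r ^ k))"
proof -
  define r where "r = (1 + spectral_radius A) / 2"
  have "0 \<le> spectral_radius A"
    using spectral_radius_mem_max(1)[OF A n] by auto
  then have r: "0 < r" "r < 1" "spectral_radius A < r"
    using sr unfolding r_def by auto
  \<comment> \<open>Rescaling by \<open>1 / r\<close> keeps the spectral radius below 1 and turns the
      constant bound on the powers into a geometric one.\<close>
  define B where "B = complex_of_real (1 / r) \<cdot>\<^sub>m A"
  have B: "B \<in> carrier_mat n n"
    unfolding B_def using A by simp
  have "spectral_radius B \<le> spectral_radius A / r"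
    unfolding B_def by (rule spectral_radius_smult_le[OF A n r(1)])
  also have "\<dots> < 1"
    using r by (simp add: divide_less_eq)
  finally obtain c where c: "norm_bound (B ^\<^sub>m k) c" for k
    using spectral_radius_jnf_norm_bound_less_1_upper_triangular[OF B] by auto
  have "A = complex_of_real r \<cdot>\<^sub>m B"
    unfolding B_def using r A by (auto intro: eq_matI)
  then have pow_A: "A ^\<^sub>m k = complex_of_real (r ^ k) \<cdot>\<^sub>m B ^\<^sub>m k" for k
    using pow_mat_smult[OF B] by simp
  have "norm_bound (A ^\<^sub>m k) (c * r ^ k)" for k
  proof
    fix i j assume "i < dim_row (A ^\<^sub>m k)" "j < dim_col (A ^\<^sub>m k)"
    then have ij: "i < dim_row (B ^\<^sub>m k)" "j < dim_col (B ^\<^sub>m k)"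
      using A B by auto
    have "norm ((A ^\<^sub>m k) $$ (i, j)) = r ^ k * norm ((B ^\<^sub>m k) $$ (i, j))"
      using ij r by (simp add: pow_A norm_mult norm_power)
    also have "\<dots> \<le> r ^ k * c"
      using c[of k] ij r unfolding norm_bound_def by (simp add: mult_left_mono)
    finally show "norm ((A ^\<^sub>m k) $$ (i, j)) \<le> c * r ^ k"
      by (simp add: mult.commute)
  qed
  then show ?thesis
    using r by blast
qed

definition jnf_cmat :: "(nat \<Rightarrow> 'n) \<Rightarrow> nat \<Rightarrow> real^'n^'n \<Rightarrow> complex Matrix.mat" where
  "jnf_cmat f n M = Matrix.mat n n (\<lambda>(i, j). complex_of_real (M $ f i $ f j))"

lemma jnf_cmat_carrier [simp]: "jnf_cmat f n M \<in> carrier_mat n n"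
  by (simp add: jnf_cmat_def)

lemma jnf_cmat_dim [simp]: "dim_row (jnf_cmat f n M) = n" "dim_col (jnf_cmat f n M) = n"
  by (simp_all add: jnf_cmat_def)

lemma jnf_cmat_index [simp]:
  "i < n \<Longrightarrow> j < n \<Longrightarrow> jnf_cmat f n M $$ (i, j) = complex_of_real (M $ f i $ f j)"
  by (simp add: jnf_cmat_def)

context
  fixes f :: "nat \<Rightarrow> 'n::finite" and n :: nat
  assumes f: "bij_betw f {0..<n} UNIV"
begin

lemma inv_into_enum_less: "inv_into {0..<n} f a < n"
  using bij_betw_apply[OF bij_betw_inv_into[OF f]] by simp

lemma enum_inv_into: "f (inv_into {0..<n} f a) = a"
  using bij_betw_inv_into_right[OF f] by simp

lemma inv_into_enum: "i < n \<Longrightarrow> inv_into {0..<n} f (f i) = i"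
  using bij_betw_inv_into_left[OF f] by simp

lemma jnf_cmat_mult: "jnf_cmat f n (M ** N) = jnf_cmat f n M * jnf_cmat f n N"
proof (rule eq_matI)
  fix i j
  assume "i < dim_row (jnf_cmat f n M * jnf_cmat f n N)" "j < dim_col (jnf_cmat f n M * jnf_cmat f n N)"
  then have ij: "i < n" "j < n" by simp_all
  have "(\<Sum>k\<in>UNIV. M $ f i $ k * N $ k $ f j) = (\<Sum>k\<in>{0..<n}. M $ f i $ f k * N $ f k $ f j)"
    by (rule sum.reindex_bij_betw[OF f, symmetric])
  then show "jnf_cmat f n (M ** N) $$ (i, j) = (jnf_cmat f n M * jnf_cmat f n N) $$ (i, j)"
    using ij by (simp add: matrix_matrix_mult_def scalar_prod_def)
qed simp_all

lemma jnf_cmat_one: "jnf_cmat f n (mat 1) = 1\<^sub>m n"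
  using bij_betw_imp_inj_on[OF f]
  by (intro eq_matI) (auto simp: Finite_Cartesian_Product.mat_def inj_on_def)

lemma jnf_cmat_mat_pow: "jnf_cmat f n (mat_pow M k) = jnf_cmat f n M ^\<^sub>m k"
  by (induction k) (simp_all add: jnf_cmat_one mat_pow_Suc' jnf_cmat_mult)

lemma is_eigenvalue_if_eigenvalue_jnf_cmat:
  assumes "eigenvalue (jnf_cmat f n M) \<mu>"
  shows "is_eigenvalue M \<mu>"
proof -
  from assms obtain v where v: "v \<in> carrier_vec n" "v \<noteq> 0\<^sub>v n"
    and ev: "jnf_cmat f n M *\<^sub>v v = \<mu> \<cdot>\<^sub>v v"
    unfolding eigenvalue_def eigenvector_def by auto
  define g where "g = inv_into {0..<n} f"
  have gf: "g (f i) = i" if "i < n" for i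
    unfolding g_def using that by (rule inv_into_enum)
  have fg: "f (g a) = a" and gn: "g a < n" for a
    unfolding g_def by (rule enum_inv_into inv_into_enum_less)+
  define u where "u = (\<chi> a. vec_index v (g a))"
  obtain i where i: "i < n" "vec_index v i \<noteq> 0"
    using v by (metis carrier_vecD eq_vecI index_zero_vec(1,2))
  then have "u $ f i \<noteq> 0"
    unfolding u_def by (simp add: gf)
  then have "u \<noteq> 0"
    by auto
  moreover have "cmat M *v u = \<mu> *s u"
  proof (subst Finite_Cartesian_Product.vec_eq_iff, rule allI)
    fix a
    have "(cmat M *v u) $ a = (\<Sum>b\<in>UNIV. complex_of_real (M $ a $ b) * vec_index v (g b))"
      by (simp add: matrix_vector_mult_def cmat_def u_def)
    also have "\<dots> = (\<Sum>k\<in>{0..<n}. jnf_cmat f n M $$ (g a, k) * vec_index v k)"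
      using gn[of a] by (simp add: sum.reindex_bij_betw[OF f, symmetric] gf fg)
    also have "\<dots> = vec_index (jnf_cmat f n M *\<^sub>v v) (g a)"
      using gn[of a] v(1) by (simp add: scalar_prod_def)
    also have "\<dots> = (\<mu> *s u) $ a"
      using gn[of a] v(1) by (simp add: ev u_def)
    finally show "(cmat M *v u) $ a = (\<mu> *s u) $ a" .
  qed
  ultimately show ?thesis
    unfolding is_eigenvalue_def by blast
qed

lemma schur_mat_pow_bound_geometric:
  fixes M :: "real^'n^'n"
  assumes "schur M"
  shows "\<exists>c r. 0 < r \<and> r < 1 \<and> (\<forall>k a b. \<bar>mat_pow M k $ a $ b\<bar> \<le> c * r ^ k)"
proof -
  have n: "0 < n"
    using bij_betw_imp_surj_on[OF f] by (cases n) auto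
  obtain \<mu> where "eigenvalue (jnf_cmat f n M) \<mu>" "spectral_radius (jnf_cmat f n M) = cmod \<mu>"
    using spectral_radius_mem_max(1)[OF jnf_cmat_carrier n] unfolding spectrum_def by auto
  then have "spectral_radius (jnf_cmat f n M) < 1"
    using assms is_eigenvalue_if_eigenvalue_jnf_cmat unfolding schur_def is_eigenvalue_def by auto
  then obtain c r where r: "0 < r" "r < 1" and c: "norm_bound (jnf_cmat f n M ^\<^sub>m k) (c * r ^ k)" for k
    using pow_mat_norm_bound_geometric[OF jnf_cmat_carrier n] by blast
  have "\<bar>mat_pow M k $ a $ b\<bar> \<le> c * r ^ k" for k a b
  proof -
    let ?g = "inv_into {0..<n} f"
    have "norm ((jnf_cmat f n M ^\<^sub>m k) $$ (?g a, ?g b)) \<le> c * r ^ k"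
      using c[of k] inv_into_enum_less unfolding norm_bound_def by simp
    then show ?thesis
      using inv_into_enum_less by (simp add: jnf_cmat_mat_pow[symmetric] enum_inv_into)
  qed
  then show ?thesis
    using r by blast
qed

end

lemma schur_mat_pow_tendsto_zero:
  fixes M :: "real^'n^'n"
  assumes "schur M"
  shows "(\<lambda>k. mat_pow M k *v e) \<longlonglongrightarrow> 0"
proof -
  obtain f :: "nat \<Rightarrow> 'n" where f: "bij_betw f {0..<CARD('n)} UNIV"
    using ex_bij_betw_nat_finite[of "UNIV :: 'n set"] by auto
  obtain c r where r: "0 < r" "r < 1"
    and bound: "\<And>k a b. \<bar>mat_pow M k $ a $ b\<bar> \<le> c * r ^ k"
    using schur_mat_pow_bound_geometric[OF f assms] by blast
  have "(\<lambda>k. c * r ^ k) \<longlonglongrightarrow> 0"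
    using r by (intro tendsto_mult_right_zero LIMSEQ_realpow_zero) auto
  then have entries: "(\<lambda>k. mat_pow M k $ a $ b) \<longlonglongrightarrow> 0" for a b
    by (rule Lim_null_comparison[rotated]) (simp add: bound always_eventually)
  show ?thesis
  proof (rule vec_tendstoI)
    fix a
    have "(\<lambda>k. \<Sum>b\<in>UNIV. mat_pow M k $ a $ b * e $ b) \<longlonglongrightarrow> (\<Sum>b\<in>UNIV. 0 * e $ b)"
      by (intro tendsto_sum tendsto_mult entries tendsto_const)
    then show "(\<lambda>k. (mat_pow M k *v e) $ a) \<longlonglongrightarrow> 0 $ a"
      by (simp add: matrix_vector_mult_def)
  qed
qed

lemma closed_loop_regulator_equation:
  fixes A :: "'a::comm_ring_1^'n^'n" and P :: "'a^'p^'n"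
  assumes "A ** P + B ** G = P ** S"
  shows "(A + B ** K) ** P + B ** (G - K ** P) = P ** S"
proof -
  have "((A + B ** K) ** P + B ** (G - K ** P)) *v v = (A ** P + B ** G) *v v" for v
    by (simp add: matrix_vector_mult_add_rdistrib matrix_vector_mult_diff_rdistrib
        matrix_vector_right_distrib matrix_vector_mult_diff_distrib matrix_vector_mul_assoc[symmetric])
  then show ?thesis
    using assms by (simp add: matrix_eq)
qed

lemma traj_Suc_shift:
  "traj Ac BL S x w (Suc k) = traj Ac BL S (Ac *v x + BL *v w) (S *v w) k"
  by (induction k) (simp_all add: case_prod_beta)

lemma traj_closed_form:
  assumes reg: "Ac ** P + BL = P ** S"
  shows "traj Ac BL S x w k =
    (P *v (mat_pow S k *v w) + mat_pow Ac k *v (x - P *v w), mat_pow S k *v w)"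
proof (induction k)
  case 0
  then show ?case by simp
next
  case (Suc k)
  have reg_v: "Ac *v (P *v v) + BL *v v = P *v (S *v v)" for v
    using arg_cong[OF reg, of "\<lambda>M. M *v v"]
    by (simp add: matrix_vector_mult_add_rdistrib matrix_vector_mul_assoc)
  show ?case
    using Suc reg_v[of "mat_pow S k *v w"]
    by (simp add: mat_pow_Suc matrix_vector_mul_assoc[symmetric] algebra_simps)
qed

lemma traj_tendsto_steady_state:
  assumes "schur Ac" "Ac ** P + BL = P ** S" "mat_pow S \<rho> = mat 1" "0 < \<rho>"
  shows "(\<lambda>j. traj Ac BL S x w (k + j * \<rho>)) \<longlonglongrightarrow> traj Ac BL S (P *v w) w k"
proof -
  have "strict_mono (\<lambda>j. k + j * \<rho>)"
    using assms(4) by (intro strict_monoI) simp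
  then have "(\<lambda>j. mat_pow Ac (k + j * \<rho>) *v (x - P *v w)) \<longlonglongrightarrow> 0"
    using LIMSEQ_subseq_LIMSEQ[OF schur_mat_pow_tendsto_zero[OF assms(1)]] by (simp add: o_def)
  then show ?thesis
    unfolding traj_closed_form[OF assms(2)] mat_pow_add_mult_period[OF assms(3)]
    by (auto intro!: tendsto_eq_intros)
qed

definition state_input ::
    "real^'n^'m \<Rightarrow> real^'p^'m \<Rightarrow> (real^'n) \<times> (real^'p) \<Rightarrow> (real^'n) \<times> (real^'m)" where
  "state_input K L s = (fst s, K *v fst s + L *v snd s)"

lemma tendsto_state_input:
  "(s \<longlongrightarrow> s0) F \<Longrightarrow> ((\<lambda>j. state_input K L (s j)) \<longlongrightarrow> state_input K L s0) F"
  unfolding state_input_def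
  by (intro tendsto_intros bounded_linear.tendsto[OF matrix_vector_mul_bounded_linear])

lemma mem_O_inf_iff:
  "(x, w) \<in> O_inf A B K L S Z \<epsilon> \<longleftrightarrow>
    (\<forall>k. state_input K L (traj (A + B ** K) (B ** L) S x w k) \<in> (\<lambda>z. (1 - \<epsilon>) *\<^sub>R z) ` Z)"
  by (simp add: O_inf_def state_input_def case_prod_beta)

lemma O_inf_step:
  assumes "(x, w) \<in> O_inf A B K L S Z \<epsilon>"
  shows "((A + B ** K) *v x + (B ** L) *v w, S *v w) \<in> O_inf A B K L S Z \<epsilon>"
  using assms unfolding mem_O_inf_iff by (metis traj_Suc_shift)

lemma R_inf_mult:
  "w \<in> R_inf A B K L S Z \<epsilon> \<Longrightarrow> S *v w \<in> R_inf A B K L S Z \<epsilon>"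
  unfolding R_inf_def using O_inf_step by blast

lemma R_inf_mat_pow:
  "w \<in> R_inf A B K L S Z \<epsilon> \<Longrightarrow> mat_pow S k *v w \<in> R_inf A B K L S Z \<epsilon>"
  by (induction k) (simp_all add: mat_pow_Suc matrix_vector_mul_assoc[symmetric] R_inf_mult)

lemma image_R_inf_eq:
  assumes "mat_pow S \<rho> = mat 1" "0 < \<rho>"
  shows "(\<lambda>w. S *v w) ` R_inf A B K L S Z \<epsilon> = R_inf A B K L S Z \<epsilon>"
proof
  show "(\<lambda>w. S *v w) ` R_inf A B K L S Z \<epsilon> \<subseteq> R_inf A B K L S Z \<epsilon>"
    using R_inf_mult by blast
next
  show "R_inf A B K L S Z \<epsilon> \<subseteq> (\<lambda>w. S *v w) ` R_inf A B K L S Z \<epsilon>"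
  proof
    fix w assume "w \<in> R_inf A B K L S Z \<epsilon>"
    moreover have "w = S *v (mat_pow S (\<rho> - 1) *v w)"
      using mat_pow_period_inverse[OF assms] by (simp add: matrix_vector_mul_assoc)
    ultimately show "w \<in> (\<lambda>w. S *v w) ` R_inf A B K L S Z \<epsilon>"
      using R_inf_mat_pow by blast
  qed
qed

lemma steady_state_mem_O_inf:
  assumes "schur (A + B ** K)" "(A + B ** K) ** P + B ** L = P ** S"
    and "mat_pow S \<rho> = mat 1" "0 < \<rho>"
    and "compact Z" and "w \<in> R_inf A B K L S Z \<epsilon>"
  shows "(P *v w, w) \<in> O_inf A B K L S Z \<epsilon>"
  unfolding mem_O_inf_iff
proof
  fix k
  let ?traj = "traj (A + B ** K) (B ** L) S"
  let ?Z = "(\<lambda>z. (1 - \<epsilon>) *\<^sub>R z) ` Z"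
  obtain x where "(x, w) \<in> O_inf A B K L S Z \<epsilon>"
    using assms(6) unfolding R_inf_def by blast
  then have admissible: "state_input K L (?traj x w (k + j * \<rho>)) \<in> ?Z" for j
    unfolding mem_O_inf_iff by blast
  have "closed ?Z"
    using assms(5) by (intro compact_imp_closed compact_scaling)
  then show "state_input K L (?traj (P *v w) w k) \<in> ?Z"
    using admissible traj_tendsto_steady_state[OF assms(1-4), THEN tendsto_state_input]
    by (rule closed_sequentially)
qed

theorem lemma4:
  fixes A :: "real^'n^'n" and B :: "real^'m^'n" and C :: "real^'n^'q"
    and K :: "real^'n^'m" and S :: "real^'p^'p" and Qe :: "real^'p^'q"
    and Pi :: "real^'p^'n" and Gamma :: "real^'p^'m"
    and Z :: "((real^'n) \<times> (real^'m)) set" and \<epsilon> :: real and \<rho> :: nat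
  assumes ctrb: "controllable A B"
    and Z_poly: "polytope Z" and Z_int: "0 \<in> interior Z"
    and K_schur: "schur (A + B ** K)"
    and rho_pos: "\<rho> > 0" and S_per: "mat_pow S \<rho> = mat 1"
    and rank_cond: "\<And>\<mu>. is_eigenvalue S \<mu> \<Longrightarrow> full_row_rank (regulator_block A B C \<mu>)"
    and reg1: "A ** Pi + B ** Gamma = Pi ** S"
    and reg2: "C ** Pi = Qe"
    and eps: "0 < \<epsilon>" "\<epsilon> < 1"
  shows "(\<forall>w \<in> R_inf A B K (Gamma - K ** Pi) S Z \<epsilon>.
           S *v w \<in> R_inf A B K (Gamma - K ** Pi) S Z \<epsilon>
         \<and> matrix_inv S *v w \<in> R_inf A B K (Gamma - K ** Pi) S Z \<epsilon>
         \<and> (Pi *v w, w) \<in> O_inf A B K (Gamma - K ** Pi) S Z \<epsilon>)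
         \<and> ((\<lambda>w. S *v w) ` R_inf A B K (Gamma - K ** Pi) S Z \<epsilon> = R_inf A B K (Gamma - K ** Pi) S Z \<epsilon>)"
proof -
  let ?L = "Gamma - K ** Pi"
  let ?R = "R_inf A B K ?L S Z \<epsilon>"
  have reg: "(A + B ** K) ** Pi + B ** ?L = Pi ** S"
    using reg1 by (rule closed_loop_regulator_equation)
  have "compact Z"
    using Z_poly by (rule polytope_imp_compact)
  have inv: "matrix_inv S = mat_pow S (\<rho> - 1)"
    using mat_pow_period_inverse[OF S_per rho_pos] by (rule matrix_inv_unique)
  have "S *v w \<in> ?R \<and> matrix_inv S *v w \<in> ?R \<and> (Pi *v w, w) \<in> O_inf A B K ?L S Z \<epsilon>"
    if "w \<in> ?R" for w
    using that R_inf_mult R_inf_mat_pow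
      steady_state_mem_O_inf[OF K_schur reg S_per rho_pos \<open>compact Z\<close>]
    unfolding inv by blast
  then show ?thesis
    using image_R_inf_eq[OF S_per rho_pos] by blast
qed

end
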